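(* A superconvex set $X$ is iterative if and only if for all sequences $(x_i)_{i\ge0}$ and $(y_i)_{i\ge0}$ of elements of $X$ satisfying $x_i=\tfrac12\cdot y_i+\tfrac12\cdot x_{i+1}$ for all $i$, it holds that $x_0=\sum_{i\in\mathbb{N}}2^{-(i+1)}\cdot y_i$.
   Context: A superconvex weight function is a pair $(I,\lambda)$ with $I$ any set and $\lambda\colon I\to[0,1]$ with $\sum_{i\in I}\lambda_i=1$. A superconvex set is a set $X$ with an operation assigning to each superconvex weight function $(I,\lambda)$ and $x\colon I\to X$ an element $\sum_{i\in I}\lambda_i\cdot x_i\in X$, such that $\sum_{i\in 1}1\cdot x=x$ and $\sum_{i\in I}\lambda_i\cdot(\sum_{j\in J}\mu_{ij}\cdot x_j)=\sum_{j\in J}(\sum_{i\in I}\lambda_i\mu_{ij})\cdot x_j$ for all weight functions $(I,\lambda)$, $(J,\mu_i)$. Binary combinations are written $\lambda\cdot x+\mu\cdot y$. A superconvex set is iterative if for every sequence of proper binary combinations $x_i=\lambda_i\cdot y_i+\mu_i\cdot x_{i+1}$ (with $\lambda_i,\mu_i\in(0,1)$, $\lambda_i+\mu_i=1$) such that $\lim_{n\to\infty}\prod_{i<n}\mu_i=0$, one has $x_0=\sum_{i\in\mathbb{N}}\big(\lambda_i\prod_{j<i}\mu_j\big)\cdot y_i$. *)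

theory Defs
  imports "HOL-Probability.Probability_Mass_Function"
begin

text \<open>A superconvex structure on a type 'x is an operation assigning to every
countably supported probability distribution (i.e. the distribution induced by a
superconvex weight function (I,lambda) together with x : I -> X) an element of X,
satisfying the projection and composition laws of the paper.  The combination
sum_i lambda_i x_i is the value of the operation on the pushforward distribution.\<close>

definition superconvex :: "('x pmf \<Rightarrow> 'x) \<Rightarrow> bool" where
  "superconvex op \<longleftrightarrow>
     (\<forall>x. op (return_pmf x) = x) \<and>
     (\<forall>M :: 'x pmf pmf. op (map_pmf op M) = op (join_pmf M))"

definition bincomb :: "('x pmf \<Rightarrow> 'x) \<Rightarrow> real \<Rightarrow> 'x \<Rightarrow> 'x \<Rightarrow> 'x" where
  "bincomb op a x y = op (map_pmf (\<lambda>b. if b then x else y) (bernoulli_pmf a))"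

definition natcomb :: "('x pmf \<Rightarrow> 'x) \<Rightarrow> (nat \<Rightarrow> real) \<Rightarrow> (nat \<Rightarrow> 'x) \<Rightarrow> 'x" where
  "natcomb op w y = op (map_pmf y (embed_pmf w))"

definition iterative :: "('x pmf \<Rightarrow> 'x) \<Rightarrow> bool" where
  "iterative op \<longleftrightarrow>
     (\<forall>(lam :: nat \<Rightarrow> real) (mu :: nat \<Rightarrow> real) (x :: nat \<Rightarrow> 'x) (y :: nat \<Rightarrow> 'x).
        (\<forall>i. 0 < lam i \<and> lam i < 1 \<and> 0 < mu i \<and> mu i < 1 \<and> lam i + mu i = 1) \<and>
        (\<forall>i. x i = bincomb op (lam i) (y i) (x (Suc i))) \<and>
        (\<lambda>n. \<Prod>i<n. mu i) \<longlonglongrightarrow> 0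
        \<longrightarrow> x 0 = natcomb op (\<lambda>i. lam i * (\<Prod>j<i. mu j)) y)"

end

theory Submission
  imports Defs
begin

(* Read an iterative sequence as a stick-breaking of the unit interval: with
   P n = prod_{i<n} mu_i, the interval (P (n+1), P n] has length lam_n P n and carries y_n, and
   x_n is the combination of the y's over [0, P n].  Pushing the uniform distribution on [c, d]
   forward along this partition gives a distribution on indices, so every p in (0, 1] has a
   well-defined combination over [0, p]: the labels below any P m <= p may be collapsed into x_m.
   The combinations over [0, 2^-k] then form a sequence satisfying the 1/2-recursion, with the
   combinations over the dyadic pieces [2^-(k+1), 2^-k] as new y's.  The halving hypothesis
   expresses x_0 as their combination with weights 2^-(k+1), and the dyadic pieces reassemble
   into the stick-breaking weights lam_n P n.  The converse is the case lam = mu = 1/2. *)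

lemma pmf_embed_pmf_sums:
  fixes f :: "nat \<Rightarrow> real"
  assumes "\<And>n. 0 \<le> f n" "f sums 1"
  shows "pmf (embed_pmf f) n = f n"
proof (rule pmf_embed_pmf)
  show "0 \<le> f n" for n using assms(1) .
  have "(\<integral>\<^sup>+n. ennreal (f n) \<partial>count_space UNIV) = (\<Sum>n. ennreal (f n))"
    by (rule nn_integral_count_space_nat)
  also have "\<dots> = ennreal (\<Sum>n. f n)"
    using assms by (intro suminf_ennreal2) (auto simp: sums_iff)
  finally show "(\<integral>\<^sup>+n. ennreal (f n) \<partial>count_space UNIV) = 1"
    using assms(2) by (simp add: sums_iff)
qed

definition stick_pmf :: "(nat \<Rightarrow> real) \<Rightarrow> nat pmf" where
  "stick_pmf c = embed_pmf (\<lambda>n. c n - c (Suc n))"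

lemma pmf_stick_pmf:
  assumes "c 0 = 1" "\<And>n. c (Suc n) \<le> c n" "c \<longlonglongrightarrow> 0"
  shows "pmf (stick_pmf c) n = c n - c (Suc n)"
  unfolding stick_pmf_def
  using assms telescope_sums'[OF assms(3)] by (intro pmf_embed_pmf_sums) auto

lemma map_pmf_eq_bernoulli_pmf: "map_pmf (\<lambda>i. i = a) M = bernoulli_pmf (pmf M a)"
proof (rule pmf_eqI)
  fix b :: bool
  have "(\<lambda>i. i = a) -` {True} = {a}" "(\<lambda>i. i = a) -` {False} = UNIV - {a}" by auto
  then show "pmf (map_pmf (\<lambda>i. i = a) M) b = pmf (bernoulli_pmf (pmf M a)) b"
    using measure_pmf.prob_compl[of "{a}" M]
    by (cases b) (simp_all add: pmf_map measure_pmf_single pmf_le_1)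
qed

lemma bincomb_eq_map_pmf:
  assumes "\<And>i. i \<in> set_pmf M \<Longrightarrow> f i = (if i = a then u else v)"
  shows "op (map_pmf f M) = bincomb op (pmf M a) u v"
proof -
  have "map_pmf f M = map_pmf (\<lambda>b. if b then u else v) (map_pmf (\<lambda>i. i = a) M)"
    using assms by (simp add: map_pmf_comp cong: map_pmf_cong)
  then show ?thesis by (simp add: bincomb_def map_pmf_eq_bernoulli_pmf)
qed

lemma superconvex_return: "superconvex op \<Longrightarrow> op (return_pmf a) = a"
  unfolding superconvex_def by blast

lemma superconvex_map_const:
  assumes "superconvex op" "\<And>i. i \<in> set_pmf M \<Longrightarrow> f i = a"
  shows "op (map_pmf f M) = a"
proof -
  have "map_pmf f M = return_pmf a"
    using assms(2) by (simp cong: map_pmf_cong)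
  then show ?thesis using superconvex_return[OF assms(1)] by simp
qed

lemma superconvex_map_bind:
  assumes "superconvex op"
  shows "op (map_pmf f (bind_pmf M K)) = op (map_pmf (\<lambda>a. op (map_pmf f (K a))) M)"
proof -
  have "op (map_pmf f (bind_pmf M K)) = op (join_pmf (map_pmf (\<lambda>a. map_pmf f (K a)) M))"
    by (subst map_bind_pmf) (simp add: bind_eq_join_pmf)
  also have "\<dots> = op (map_pmf op (map_pmf (\<lambda>a. map_pmf f (K a)) M))"
    using assms unfolding superconvex_def by metis
  finally show ?thesis by (simp add: map_pmf_comp)
qed

locale unit_interval_partition =
  fixes P :: "nat \<Rightarrow> real"
  assumes P_0: "P 0 = 1" and P_pos: "0 < P n" and P_Suc_le: "P (Suc n) \<le> P n"
    and P_lim: "P \<longlonglongrightarrow> 0"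
begin

lemma P_antimono: "m \<le> n \<Longrightarrow> P n \<le> P m"
  by (induction n rule: dec_induct) (auto intro: order_trans[OF P_Suc_le])

lemma P_le_1: "P n \<le> 1"
  using P_antimono[of 0 n] P_0 by simp

lemma ex_P_le:
  assumes "0 < p"
  shows "\<exists>m. P m \<le> p"
proof -
  obtain m where "\<forall>n\<ge>m. P n < p"
    using order_tendstoD(2)[OF P_lim assms] by (auto simp: eventually_sequentially)
  then show ?thesis by (meson less_imp_le order_refl)
qed

text \<open>The points \<open>P n\<close> cut \<open>(0, 1]\<close> into the intervals \<open>(P (Suc n), P n]\<close>;
  \<open>overlap n t\<close> is the length of \<open>[0, t] \<inter> [P (Suc n), P n]\<close>, and \<open>interval_pmf c d\<close> is
  the image of the uniform distribution on \<open>[c, d]\<close> under the map sending the \<open>n\<close>-th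
  interval to \<open>n\<close>.\<close>

definition overlap :: "nat \<Rightarrow> real \<Rightarrow> real" where
  "overlap n t = min (P n) t - min (P (Suc n)) t"

definition interval_pmf :: "real \<Rightarrow> real \<Rightarrow> nat pmf" where
  "interval_pmf c d = embed_pmf (\<lambda>n. (overlap n d - overlap n c) / (d - c))"

lemma overlap_mono: "c \<le> d \<Longrightarrow> overlap n c \<le> overlap n d"
  using P_Suc_le[of n] unfolding overlap_def by (auto simp: min_def)

lemma overlap_0: "overlap n 0 = 0"
  using P_pos[of n] P_pos[of "Suc n"] unfolding overlap_def by (auto simp: min_def)

lemma overlap_1: "overlap n 1 = P n - P (Suc n)"
  using P_le_1[of n] P_le_1[of "Suc n"] unfolding overlap_def by (simp add: min_def)

lemma overlap_sums: "0 \<le> t \<Longrightarrow> (\<lambda>n. overlap n t) sums min 1 t"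
  using telescope_sums'[OF tendsto_min[OF P_lim tendsto_const, of t]]
  by (simp add: overlap_def[abs_def] P_0)

lemma pmf_interval_pmf:
  assumes "0 \<le> c" "c < d" "d \<le> 1"
  shows "pmf (interval_pmf c d) n = (overlap n d - overlap n c) / (d - c)"
  unfolding interval_pmf_def
proof (rule pmf_embed_pmf_sums)
  show "0 \<le> (overlap n d - overlap n c) / (d - c)" for n
    using assms overlap_mono[of c d n] by simp
  have "(\<lambda>n. overlap n d - overlap n c) sums (min 1 d - min 1 c)"
    using assms by (intro sums_diff overlap_sums) auto
  then have "(\<lambda>n. (overlap n d - overlap n c) / (d - c)) sums ((d - c) / (d - c))"
    using assms by (intro sums_divide) simp
  then show "(\<lambda>n. (overlap n d - overlap n c) / (d - c)) sums 1"
    using assms by simp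
qed

lemma set_pmf_interval_pmf:
  assumes "0 \<le> c" "c < d" "d \<le> 1" "i \<in> set_pmf (interval_pmf c d)"
  shows "c < P i" "P (Suc i) < d"
proof -
  have "overlap i d \<noteq> overlap i c"
    using assms by (auto simp: set_pmf_iff pmf_interval_pmf)
  then show "c < P i" "P (Suc i) < d"
    using P_Suc_le[of i] assms(2) unfolding overlap_def by (auto simp: min_def split: if_splits)
qed

lemma set_pmf_interval_pmf_initial:
  "i \<in> set_pmf (interval_pmf 0 (P m)) \<Longrightarrow> m \<le> i"
  using set_pmf_interval_pmf(2)[of 0 "P m" i] P_pos[of m] P_le_1[of m] P_antimono[of "Suc i" m]
  by (cases "m \<le> i") auto

lemma set_pmf_interval_pmf_final:
  assumes "P m \<le> c" "c < d" "d \<le> 1" "i \<in> set_pmf (interval_pmf c d)"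
  shows "i < m"
  using set_pmf_interval_pmf(1)[of c d i] assms P_pos[of m] P_antimono[of m i]
  by (cases "i < m") auto

lemma pmf_interval_pmf_initial: "pmf (interval_pmf 0 (P m)) m = 1 - P (Suc m) / P m"
  using P_pos[of m] P_pos[of "Suc m"] P_le_1[of m] P_Suc_le[of m]
  by (simp add: pmf_interval_pmf overlap_def overlap_0 min_def field_simps)

lemma interval_pmf_split:
  assumes "0 < c" "c < d" "d \<le> 1"
  shows "interval_pmf 0 d
    = bind_pmf (bernoulli_pmf ((d - c) / d)) (\<lambda>b. if b then interval_pmf c d else interval_pmf 0 c)"
    (is "_ = ?mixture")
proof (rule pmf_eqI)
  fix n
  have "pmf (interval_pmf 0 d) n
      = (overlap n d - overlap n c) / (d - c) * ((d - c) / d) + overlap n c / c * (1 - (d - c) / d)"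
    using assms by (simp add: pmf_interval_pmf overlap_0 field_simps)
  also have "\<dots> = pmf ?mixture n"
    using assms by (simp add: pmf_bind pmf_interval_pmf overlap_0)
  finally show "pmf (interval_pmf 0 d) n = pmf ?mixture n" .
qed

lemma bind_stick_pmf_interval_pmf:
  assumes c_0: "c 0 = 1" and c_decr: "\<And>k. c (Suc k) < c k" and c_lim: "c \<longlonglongrightarrow> 0"
  shows "bind_pmf (stick_pmf c) (\<lambda>k. interval_pmf (c (Suc k)) (c k)) = stick_pmf P"
proof (rule pmf_eqI)
  fix n
  have "decseq c" using c_decr by (intro decseq_SucI less_imp_le)
  then have c_bounds: "0 \<le> c k" "c k \<le> 1" for k
    using decseq_ge[OF _ c_lim] decseqD[of c 0 k] c_0 by auto
  have pmf_c: "pmf (stick_pmf c) k = c k - c (Suc k)" for k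
    using c_0 c_decr c_lim by (intro pmf_stick_pmf less_imp_le)
  let ?gain = "\<lambda>k. overlap n (c k) - overlap n (c (Suc k))"
  have gain_nonneg: "0 \<le> ?gain k" for k
    using overlap_mono[OF less_imp_le[OF c_decr]] by simp
  have gain_sums: "?gain sums (P n - P (Suc n))"
  proof -
    have "(\<lambda>k. overlap n (c k)) \<longlonglongrightarrow> overlap n 0"
      unfolding overlap_def by (intro tendsto_intros c_lim)
    from telescope_sums'[OF this] show ?thesis by (simp add: c_0 overlap_0 overlap_1)
  qed
  have "ennreal (pmf (bind_pmf (stick_pmf c) (\<lambda>k. interval_pmf (c (Suc k)) (c k))) n)
      = (\<integral>\<^sup>+k. ennreal (pmf (stick_pmf c) k * pmf (interval_pmf (c (Suc k)) (c k)) n) \<partial>count_space UNIV)"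
    by (simp add: ennreal_pmf_bind nn_integral_measure_pmf ennreal_mult')
  also have "\<dots> = (\<integral>\<^sup>+k. ennreal (?gain k) \<partial>count_space UNIV)"
    using c_bounds c_decr by (intro nn_integral_cong) (simp add: pmf_c pmf_interval_pmf)
  also have "\<dots> = ennreal (P n - P (Suc n))"
    using gain_sums gain_nonneg by (simp add: nn_integral_count_space_nat suminf_ennreal2 sums_iff)
  also have "P n - P (Suc n) = pmf (stick_pmf P) n"
    using P_0 P_Suc_le P_lim by (intro pmf_stick_pmf[symmetric])
  finally show "pmf (bind_pmf (stick_pmf c) (\<lambda>k. interval_pmf (c (Suc k)) (c k))) n = pmf (stick_pmf P) n"
    by simp
qed

end

lemma unit_interval_partition_prod:
  fixes mu :: "nat \<Rightarrow> real"
  assumes "\<And>i. 0 < mu i" "\<And>i. mu i \<le> 1" "(\<lambda>n. \<Prod>i<n. mu i) \<longlonglongrightarrow> 0"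
  shows "unit_interval_partition (\<lambda>n. \<Prod>i<n. mu i)"
proof
  show "0 < (\<Prod>i<n. mu i)" for n using assms(1) by (intro prod_pos) auto
  then show "(\<Prod>i<Suc n. mu i) \<le> (\<Prod>i<n. mu i)" for n
    using assms(2)[of n] by (simp add: mult_left_le)
qed (use assms(3) in simp_all)

locale iterative_sequence = unit_interval_partition P
  for P :: "nat \<Rightarrow> real" +
  fixes op :: "'x pmf \<Rightarrow> 'x" and lam :: "nat \<Rightarrow> real" and x y :: "nat \<Rightarrow> 'x"
  assumes superconvex: "superconvex op"
    and P_Suc: "P (Suc n) = (1 - lam n) * P n"
    and x_Suc: "x n = bincomb op (lam n) (y n) (x (Suc n))"
begin

definition truncate :: "nat \<Rightarrow> nat \<Rightarrow> 'x" where
  "truncate m i = (if i < m then y i else x m)"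

lemma op_map_truncate_initial: "op (map_pmf (truncate m) (interval_pmf 0 (P m))) = x m"
  using superconvex by (rule superconvex_map_const) (auto simp: truncate_def dest: set_pmf_interval_pmf_initial)

lemma x_eq_op_map_truncate_Suc: "x m = op (map_pmf (truncate (Suc m)) (interval_pmf 0 (P m)))"
proof -
  have "op (map_pmf (truncate (Suc m)) (interval_pmf 0 (P m)))
      = bincomb op (pmf (interval_pmf 0 (P m)) m) (y m) (x (Suc m))"
    by (rule bincomb_eq_map_pmf) (auto simp: truncate_def dest: set_pmf_interval_pmf_initial)
  moreover have "pmf (interval_pmf 0 (P m)) m = lam m"
    using P_pos[of m] by (simp add: pmf_interval_pmf_initial P_Suc)
  ultimately show ?thesis by (simp add: x_Suc[of m])
qed

lemma op_map_truncate_split: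
  assumes "0 < c" "c < d" "d \<le> 1" "P m \<le> c"
  shows "op (map_pmf (truncate m) (interval_pmf 0 d))
    = bincomb op ((d - c) / d) (op (map_pmf y (interval_pmf c d))) (op (map_pmf (truncate m) (interval_pmf 0 c)))"
proof -
  have "map_pmf (truncate m) (interval_pmf c d) = map_pmf y (interval_pmf c d)"
    using assms by (intro map_pmf_cong refl) (auto simp: truncate_def dest: set_pmf_interval_pmf_final)
  then have "(\<lambda>b. op (map_pmf (truncate m) (if b then interval_pmf c d else interval_pmf 0 c)))
      = (\<lambda>b. if b then op (map_pmf y (interval_pmf c d)) else op (map_pmf (truncate m) (interval_pmf 0 c)))"
    by auto
  then show ?thesis
    by (simp add: interval_pmf_split[OF assms(1-3)] superconvex_map_bind[OF superconvex] bincomb_def)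
qed

lemma op_map_truncate_Suc:
  assumes "0 < p" "p \<le> 1" "P m \<le> p"
  shows "op (map_pmf (truncate (Suc m)) (interval_pmf 0 p)) = op (map_pmf (truncate m) (interval_pmf 0 p))"
proof (cases "P m = p")
  case True
  then show ?thesis
    using x_eq_op_map_truncate_Suc[of m] op_map_truncate_initial[of m] by simp
next
  case False
  have split: "op (map_pmf (truncate k) (interval_pmf 0 p)) = bincomb op ((p - P m) / p)
      (op (map_pmf y (interval_pmf (P m) p))) (op (map_pmf (truncate k) (interval_pmf 0 (P m))))"
    if "P k \<le> P m" for k
    using assms False P_pos[of m] that by (intro op_map_truncate_split) auto
  show ?thesis
    using split[of m] split[of "Suc m"] P_Suc_le[of m]
      x_eq_op_map_truncate_Suc[of m] op_map_truncate_initial[of m] by simp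
qed

lemma op_map_truncate_indep:
  assumes "0 < p" "p \<le> 1" "P m \<le> p" "m \<le> m'"
  shows "op (map_pmf (truncate m') (interval_pmf 0 p)) = op (map_pmf (truncate m) (interval_pmf 0 p))"
  using assms(4)
proof (induction m' rule: dec_induct)
  case (step k)
  then show ?case
    using assms(1-3) P_antimono[of m k] op_map_truncate_Suc[of p k] by simp
qed simp

text \<open>The combination of the \<open>y n\<close> over the intervals that meet \<open>[0, p]\<close>, where all intervals
  below \<open>P m\<close> are represented together by \<open>x m\<close>; the choice of \<open>m\<close> is irrelevant.\<close>

definition segment_value :: "real \<Rightarrow> 'x" where
  "segment_value p = op (map_pmf (truncate (SOME m. P m \<le> p)) (interval_pmf 0 p))"

lemma segment_value_eq:
  assumes "0 < p" "p \<le> 1" "P m \<le> p"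
  shows "segment_value p = op (map_pmf (truncate m) (interval_pmf 0 p))"
proof -
  define m0 where "m0 = (SOME m. P m \<le> p)"
  have "P m0 \<le> p" unfolding m0_def by (rule someI_ex) (rule ex_P_le[OF assms(1)])
  then have "segment_value p = op (map_pmf (truncate (max m m0)) (interval_pmf 0 p))"
    unfolding segment_value_def m0_def[symmetric] using assms(1,2)
    by (intro op_map_truncate_indep[symmetric]) auto
  also have "\<dots> = op (map_pmf (truncate m) (interval_pmf 0 p))"
    using assms by (intro op_map_truncate_indep) auto
  finally show ?thesis .
qed

lemma segment_value_1: "segment_value 1 = x 0"
proof -
  have "segment_value 1 = op (map_pmf (truncate 0) (interval_pmf 0 1))"
    by (rule segment_value_eq) (simp_all add: P_0)
  also have "\<dots> = x 0"
    using superconvex by (rule superconvex_map_const) (simp add: truncate_def)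
  finally show ?thesis .
qed

lemma segment_value_split:
  assumes "0 < c" "c < d" "d \<le> 1"
  shows "segment_value d = bincomb op ((d - c) / d) (op (map_pmf y (interval_pmf c d))) (segment_value c)"
proof -
  obtain m where m: "P m \<le> c" using ex_P_le[OF assms(1)] ..
  have "segment_value d = op (map_pmf (truncate m) (interval_pmf 0 d))"
    using assms m by (intro segment_value_eq) auto
  also have "\<dots> = bincomb op ((d - c) / d) (op (map_pmf y (interval_pmf c d)))
      (op (map_pmf (truncate m) (interval_pmf 0 c)))"
    using assms m by (rule op_map_truncate_split)
  also have "op (map_pmf (truncate m) (interval_pmf 0 c)) = segment_value c"
    using assms m by (intro segment_value_eq[symmetric]) auto
  finally show ?thesis .
qed

lemma x_0_eq_natcomb_of_halving:
  assumes halving: "\<And>x' y'. (\<And>i. x' i = bincomb op (1/2) (y' i) (x' (Suc i)))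
    \<Longrightarrow> x' 0 = natcomb op (\<lambda>i. (1/2) ^ Suc i) y'"
  shows "x 0 = natcomb op (\<lambda>i. lam i * P i) y"
proof -
  define c :: "nat \<Rightarrow> real" where "c = (\<lambda>k. (1/2) ^ k)"
  define z where "z k = op (map_pmf y (interval_pmf (c (Suc k)) (c k)))" for k
  have "segment_value (c k) = bincomb op (1/2) (z k) (segment_value (c (Suc k)))" for k
    using segment_value_split[of "c (Suc k)" "c k"] by (simp add: c_def z_def power_le_one)
  then have "segment_value (c 0) = natcomb op (\<lambda>i. (1/2) ^ Suc i) z"
    by (rule halving)
  also have "\<dots> = op (map_pmf z (stick_pmf c))"
    by (simp add: natcomb_def stick_pmf_def c_def)
  also have "\<dots> = op (map_pmf y (bind_pmf (stick_pmf c) (\<lambda>k. interval_pmf (c (Suc k)) (c k))))"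
    unfolding z_def superconvex_map_bind[OF superconvex] ..
  also have "bind_pmf (stick_pmf c) (\<lambda>k. interval_pmf (c (Suc k)) (c k)) = stick_pmf P"
    by (rule bind_stick_pmf_interval_pmf) (simp_all add: c_def LIMSEQ_realpow_zero)
  also have "op (map_pmf y (stick_pmf P)) = natcomb op (\<lambda>i. lam i * P i) y"
    by (simp add: natcomb_def stick_pmf_def P_Suc algebra_simps)
  finally show ?thesis
    by (simp add: c_def segment_value_1)
qed

end

lemma iterative_sequence_prod:
  fixes mu :: "nat \<Rightarrow> real"
  assumes "superconvex op" "\<And>i. 0 < mu i" "\<And>i. mu i \<le> 1" "\<And>i. lam i + mu i = 1"
    and "(\<lambda>n. \<Prod>i<n. mu i) \<longlonglongrightarrow> 0" and "\<And>i. x i = bincomb op (lam i) (y i) (x (Suc i))"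
  shows "iterative_sequence (\<lambda>n. \<Prod>i<n. mu i) op lam x y"
proof (intro iterative_sequence.intro iterative_sequence_axioms.intro)
  show "unit_interval_partition (\<lambda>n. \<Prod>i<n. mu i)"
    using assms(2,3,5) by (rule unit_interval_partition_prod)
  show "(\<Prod>i<Suc n. mu i) = (1 - lam n) * (\<Prod>i<n. mu i)" for n
  proof -
    have "1 - lam n = mu n" using assms(4)[of n] by linarith
    then show ?thesis by (simp add: mult.commute)
  qed
qed (fact assms)+

lemma halving_if_iterative:
  assumes "iterative op" "\<And>i. x i = bincomb op (1/2) (y i) (x (Suc i))"
  shows "x 0 = natcomb op (\<lambda>i. (1/2) ^ Suc i) y"
proof -
  have "x 0 = natcomb op (\<lambda>i. 1/2 * (\<Prod>j<i. 1/2 :: real)) y"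
  proof (rule assms(1)[unfolded iterative_def, rule_format], intro conjI allI)
    show "x i = bincomb op (1/2) (y i) (x (Suc i))" for i by (rule assms(2))
  qed (simp_all add: LIMSEQ_realpow_zero)
  then show ?thesis by simp
qed

theorem mainTheorem7:
  fixes op :: "'x pmf \<Rightarrow> 'x"
  assumes "superconvex op"
  shows "iterative op \<longleftrightarrow>
    (\<forall>(x :: nat \<Rightarrow> 'x) (y :: nat \<Rightarrow> 'x).
       (\<forall>i. x i = bincomb op (1/2) (y i) (x (Suc i)))
       \<longrightarrow> x 0 = natcomb op (\<lambda>i. (1/2) ^ (Suc i)) y)"
proof
  assume "iterative op"
  then show "\<forall>x y. (\<forall>i. x i = bincomb op (1/2) (y i) (x (Suc i)))
      \<longrightarrow> x 0 = natcomb op (\<lambda>i. (1/2) ^ (Suc i)) y"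
    by (blast intro: halving_if_iterative)
next
  assume halving: "\<forall>x y. (\<forall>i. x i = bincomb op (1/2) (y i) (x (Suc i)))
      \<longrightarrow> x 0 = natcomb op (\<lambda>i. (1/2) ^ (Suc i)) y"
  show "iterative op"
    unfolding iterative_def
  proof (intro allI impI, elim conjE)
    fix lam mu :: "nat \<Rightarrow> real" and x y :: "nat \<Rightarrow> 'x"
    assume "\<forall>i. 0 < lam i \<and> lam i < 1 \<and> 0 < mu i \<and> mu i < 1 \<and> lam i + mu i = 1"
      and "\<forall>i. x i = bincomb op (lam i) (y i) (x (Suc i))" and "(\<lambda>n. \<Prod>i<n. mu i) \<longlonglongrightarrow> 0"
    then interpret iterative_sequence "\<lambda>n. \<Prod>i<n. mu i" op lam x y
      using assms by (intro iterative_sequence_prod) (blast intro: less_imp_le)+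
    show "x 0 = natcomb op (\<lambda>i. lam i * (\<Prod>j<i. mu j)) y"
      using halving by (intro x_0_eq_natcomb_of_halving) blast
  qed
qed

end
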